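(* Let $k\ge 2$ and $n\ge 1$ be integers and $x=\zeta_k$. Let $S=\mathrm{circ}(s_0,\dots,s_{k-1})\in\mathrm{BH}(k,k)$ be a circulant matrix, and for $0\le m\le k-1$ let $\lambda_m=\sum_{j=0}^{k-1}s_jx^{mj}$ be its eigenvalues. Suppose $H\in\mathrm{BH}(kn+k,k)$ has the block form \[H=\begin{pmatrix} S & F_k\otimes j_n\\ F_k^{\ast}\otimes j_n^{\top} & A\end{pmatrix},\] where $A=[A_{ij}]_{0\le i,j\le k-1}$ is a $kn\times kn$ matrix partitioned into $n\times n$ blocks $A_{ij}$. Then (1) for $i\neq j$, the entries of every row and of every column of $A_{ij}$ sum to $0$; (2) for each $0\le m\le k-1$, the entries of every row and of every column of $A_{mm}$ sum to $-\overline{\lambda_m}$.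
   Context: $\zeta_k=e^{2\pi\sqrt{-1}/k}$. A complex Hadamard matrix of order $N$ is an $N\times N$ matrix $H$ with all entries of modulus $1$ and $HH^{\ast}=NI_N$, where $^{\ast}$ is conjugate transpose. $\mathrm{BH}(N,k)$ denotes the set of $N\times N$ complex Hadamard matrices with all entries $k$-th roots of unity. $\mathrm{circ}(s_0,\dots,s_{k-1})$ is the $k\times k$ matrix whose $(i,j)$ entry ($0\le i,j\le k-1$) is $s_{(j-i)\bmod k}$, i.e. first row $(s_0,\dots,s_{k-1})$ and each subsequent row the cyclic shift one place to the right of the previous. $F_k=[x^{(i-1)(j-1)}]_{1\le i,j\le k}$ is the Fourier matrix, $j_n$ is the all-ones row vector of length $n$, $j_n^\top$ its transpose, and $\otimes$ is the Kronecker product $A\otimes B=[a_{ij}B]$. *)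

theory Defs
  imports Complex_Main
begin

text \<open>Matrices of varying size are represented as functions nat => nat => complex,
  only the entries with indices below the size being relevant (0-based indices).\<close>

definition zeta :: "nat \<Rightarrow> complex" where
  "zeta k = exp (2 * of_real pi * \<i> / of_nat k)"

definition is_BH :: "nat \<Rightarrow> nat \<Rightarrow> (nat \<Rightarrow> nat \<Rightarrow> complex) \<Rightarrow> bool" where
  "is_BH N k H \<longleftrightarrow>
     (\<forall>i<N. \<forall>j<N. H i j ^ k = 1) \<and>
     (\<forall>i<N. \<forall>j<N. (\<Sum>l<N. H i l * cnj (H j l)) = (if i = j then of_nat N else 0))"

definition circ :: "nat \<Rightarrow> (nat \<Rightarrow> complex) \<Rightarrow> nat \<Rightarrow> nat \<Rightarrow> complex" where
  "circ k s i j = s ((j + k - i) mod k)"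

definition fourier :: "nat \<Rightarrow> nat \<Rightarrow> nat \<Rightarrow> complex" where
  "fourier k i j = zeta k ^ (i * j)"

text \<open>F_k (x) j_n : a k x kn matrix, (i, j*n + c) entry equals F_k(i,j).\<close>
definition fourier_kron_ones :: "nat \<Rightarrow> nat \<Rightarrow> nat \<Rightarrow> nat \<Rightarrow> complex" where
  "fourier_kron_ones k n i c = fourier k i (c div n)"

text \<open>F_k^* (x) j_n^T : a kn x k matrix, (i*n + r, j) entry equals F_k^*(i,j) = cnj (F_k(j,i)).\<close>
definition fourier_adj_kron_ones_t :: "nat \<Rightarrow> nat \<Rightarrow> nat \<Rightarrow> nat \<Rightarrow> complex" where
  "fourier_adj_kron_ones_t k n r j = cnj (fourier k j (r div n))"

definition block_H :: "nat \<Rightarrow> nat \<Rightarrow> (nat \<Rightarrow> nat \<Rightarrow> complex) \<Rightarrow> (nat \<Rightarrow> nat \<Rightarrow> complex)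
    \<Rightarrow> nat \<Rightarrow> nat \<Rightarrow> complex" where
  "block_H k n S A i j =
     (if i < k then (if j < k then S i j else fourier_kron_ones k n i (j - k))
      else (if j < k then fourier_adj_kron_ones_t k n (i - k) j else A (i - k) (j - k)))"

end

theory Submission
  imports Defs "HOL-Analysis.Complex_Transcendental" "Jordan_Normal_Form.Determinant"
begin

(* Orthogonality of a top row a < k of H to the row k + (i n + r) says that the conjugated row
   sums R_j of the blocks A_ij (row r) have discrete Fourier transform -\<lambda>_i times the i-th
   character, because the columns of F_k are eigenvectors of the circulant S; Fourier inversion
   gives R_j = 0 for j \<noteq> i and R_i = -cnj \<lambda>_i. The column sums follow by applying this to
   H^*, which is again Hadamard and has the same block shape, with A replaced by A^* and S by
   the circulant S^*, whose eigenvalues are the conjugates of the \<lambda>_m. *)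

lemma sum_lessThan_add:
  fixes f :: "nat \<Rightarrow> 'a::comm_monoid_add"
  shows "(\<Sum>l<m + p. f l) = (\<Sum>l<m. f l) + (\<Sum>l<p. f (m + l))"
  by (induct p) (simp_all add: add_ac)

lemma sum_lessThan_mult:
  fixes f :: "nat \<Rightarrow> 'a::comm_monoid_add"
  shows "(\<Sum>l<k * n. f l) = (\<Sum>i<k. \<Sum>r<n. f (i * n + r))"
proof (induct k)
  case (Suc k)
  have "(\<Sum>l<Suc k * n. f l) = (\<Sum>l<k * n + n. f l)" by (simp add: add.commute)
  with Suc show ?case by (simp add: sum_lessThan_add)
qed simp

lemma mod_add_complement_cancel:
  fixes l c k :: nat
  assumes "c \<le> k" "l < k"
  shows "((l + c) mod k + (k - c)) mod k = l"
proof -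
  have "l + c + (k - c) = l + k" using assms by simp
  then show ?thesis
    using assms by (simp only: mod_add_left_eq) simp
qed

lemma sum_lessThan_mod_shift:
  fixes f :: "nat \<Rightarrow> 'a::comm_monoid_add"
  assumes "c < k"
  shows "(\<Sum>l<k. f ((l + c) mod k)) = (\<Sum>l<k. f l)"
proof (rule sum.reindex_bij_witness[where i="\<lambda>l. (l + (k - c)) mod k" and j="\<lambda>l. (l + c) mod k"])
  fix l assume "l \<in> {..<k}"
  then show "((l + c) mod k + (k - c)) mod k = l" "((l + (k - c)) mod k + c) mod k = l"
    using assms mod_add_complement_cancel[of c k l] mod_add_complement_cancel[of "k - c" k l]
    by simp_all
qed (use assms in auto)

lemma sum_lessThan_mod_reflect:
  fixes f :: "nat \<Rightarrow> 'a::comm_monoid_add"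
  shows "(\<Sum>l<k. f ((k - l) mod k)) = (\<Sum>l<k. f l)"
  by (rule sum.reindex_bij_witness[where i="\<lambda>l. (k - l) mod k" and j="\<lambda>l. (k - l) mod k"])
    (auto simp: mod_if le_diff_conv2)

lemma zeta_pow_eq_1_iff: "0 < k \<Longrightarrow> zeta k ^ d = 1 \<longleftrightarrow> k dvd d"
  unfolding zeta_def exp_of_nat_mult[symmetric]
  by (metis complex_root_unity_eq_1 One_nat_def Suc_leI times_divide_eq_right mult.commute)

lemma zeta_pow_mod: "zeta k ^ (d mod k) = zeta k ^ d"
proof (cases "k = 0")
  case False
  then have "zeta k ^ k = 1" by (simp add: zeta_pow_eq_1_iff)
  then show ?thesis
    by (metis mod_div_mult_eq power_add power_mult power_one mult.commute mult_1_right)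
qed simp

lemma norm_zeta: "norm (zeta k) = 1"
  unfolding zeta_def by simp

lemma cnj_zeta_pow_mult: "cnj (zeta k ^ d) * zeta k ^ d = 1"
  by (metis complex_norm_square mult.commute norm_power norm_zeta power_one of_real_1)

lemma cnj_zeta_pow:
  assumes "d \<le> k" shows "cnj (zeta k ^ d) = zeta k ^ (k - d)"
proof -
  have "zeta k ^ (k - d) * zeta k ^ d = 1"
    using assms zeta_pow_mod[of k k] by (simp flip: power_add)
  then show ?thesis
    by (metis cnj_zeta_pow_mult mult_cancel_right mult_zero_left zero_neq_one)
qed

lemma fourier_sym: "fourier k i j = fourier k j i"
  unfolding fourier_def by (simp add: mult.commute)

lemma fourier_mod: "fourier k i (j mod k) = fourier k i j"
  unfolding fourier_def by (metis power_mult mult.commute zeta_pow_mod)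

lemma fourier_add: "fourier k a (i + j) = fourier k a i * fourier k a j"
  unfolding fourier_def by (simp add: add_mult_distrib2 power_add)

lemma fourier_complement:
  assumes "j \<le> k"
  shows "fourier k a (k - j) = cnj (fourier k a j)"
proof -
  have "cnj (zeta k ^ j) = zeta k ^ (k - j)"
    using assms by (rule cnj_zeta_pow)
  then show ?thesis
    unfolding fourier_def by (metis complex_cnj_power mult.commute power_mult)
qed

lemma fourier_orthogonal:
  assumes "i < k" "j < k"
  shows "(\<Sum>a<k. fourier k a i * cnj (fourier k a j)) = (if i = j then of_nat k else 0)"
proof -
  define w where "w = zeta k ^ (i + (k - j))"
  have summand: "fourier k a i * cnj (fourier k a j) = w ^ a" for a
  proof -
    have "cnj (fourier k a j) = fourier k a (k - j)"
      by (rule fourier_complement[symmetric]) (use assms in simp)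
    then have "fourier k a i * cnj (fourier k a j) = fourier k a (i + (k - j))"
      by (simp only: fourier_add)
    then show ?thesis
      unfolding fourier_def w_def by (metis mult.commute power_mult)
  qed
  have "w ^ k = 1"
    using assms unfolding w_def by (simp add: zeta_pow_eq_1_iff flip: power_mult)
  moreover have w1: "w = 1 \<longleftrightarrow> i = j"
  proof -
    have "k dvd i + (k - j) \<longleftrightarrow> i = j"
      using assms by (cases "j \<le> i") (auto simp: dvd_eq_mod_eq_0 mod_if)
    then show ?thesis using assms unfolding w_def by (simp add: zeta_pow_eq_1_iff)
  qed
  ultimately show ?thesis
    by (auto simp: summand geometric_sum simp flip: w1)
qed

lemma dft_inversion:
  assumes "j < k"
  shows "(\<Sum>a<k. cnj (fourier k a j) * (\<Sum>l<k. fourier k a l * y l)) = of_nat k * y j"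
proof -
  have "(\<Sum>a<k. cnj (fourier k a j) * (\<Sum>l<k. fourier k a l * y l))
      = (\<Sum>a<k. \<Sum>l<k. y l * (fourier k a l * cnj (fourier k a j)))"
    by (simp only: sum_distrib_left mult_ac)
  also have "\<dots> = (\<Sum>l<k. y l * (\<Sum>a<k. fourier k a l * cnj (fourier k a j)))"
    unfolding sum_distrib_left by (rule sum.swap)
  also have "\<dots> = (\<Sum>l<k. y l * (if l = j then of_nat k else 0))"
    by (simp add: fourier_orthogonal assms del: complex_cnj_power)
  also have "\<dots> = of_nat k * y j"
    using assms by (simp add: if_distrib mult.commute cong: if_cong)
  finally show ?thesis .
qed

lemma dft_eq_character_imp_delta:
  assumes "i < k" "j < k"
    and "\<And>a. a < k \<Longrightarrow> (\<Sum>l<k. fourier k a l * y l) = \<mu> * fourier k a i"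
  shows "y j = (if i = j then \<mu> else 0)"
proof -
  have "of_nat k * y j = (\<Sum>a<k. cnj (fourier k a j) * (\<mu> * fourier k a i))"
    by (simp add: dft_inversion[symmetric] assms del: complex_cnj_power)
  also have "\<dots> = \<mu> * (\<Sum>a<k. fourier k a i * cnj (fourier k a j))"
    by (simp add: sum_distrib_left mult_ac del: complex_cnj_power)
  also have "\<dots> = of_nat k * (if i = j then \<mu> else 0)"
    by (simp add: fourier_orthogonal assms del: complex_cnj_power)
  finally show ?thesis
    using assms by simp
qed

definition circ_eigenvalue :: "nat \<Rightarrow> (nat \<Rightarrow> complex) \<Rightarrow> nat \<Rightarrow> complex" where
  "circ_eigenvalue k s m = (\<Sum>j<k. s j * zeta k ^ (m * j))"

lemma circ_mult_fourier:
  assumes "a < k"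
  shows "(\<Sum>l<k. circ k s a l * fourier k m l) = circ_eigenvalue k s m * fourier k m a"
proof -
  have "(\<Sum>l<k. circ k s a l * fourier k m l)
      = (\<Sum>l<k. circ k s a ((l + a) mod k) * fourier k m ((l + a) mod k))"
    using assms by (rule sum_lessThan_mod_shift[symmetric])
  also have "\<dots> = (\<Sum>l<k. s l * fourier k m (l + a))"
  proof (intro sum.cong refl)
    fix l assume "l \<in> {..<k}"
    then have "((l + a) mod k + k - a) mod k = l"
      using assms mod_add_complement_cancel[of a k l] by simp
    then show "circ k s a ((l + a) mod k) * fourier k m ((l + a) mod k) = s l * fourier k m (l + a)"
      by (simp add: circ_def fourier_mod)
  qed
  also have "\<dots> = circ_eigenvalue k s m * fourier k m a"
    by (simp add: circ_eigenvalue_def fourier_def sum_distrib_left power_add add_mult_distrib2 mult_ac)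
  finally show ?thesis .
qed

lemma cnj_circ_transpose:
  assumes "i < k" "j < k"
  shows "cnj (circ k s j i) = circ k (\<lambda>t. cnj (s ((k - t) mod k))) i j"
proof -
  have "(k - (j + k - i) mod k) mod k = (i + k - j) mod k"
    using assms by (cases "i \<le> j") (auto simp: mod_if)
  then show ?thesis
    by (simp add: circ_def)
qed

lemma circ_eigenvalue_reflect:
  "circ_eigenvalue k (\<lambda>t. cnj (s ((k - t) mod k))) m = cnj (circ_eigenvalue k s m)"
proof -
  have "(k - (k - t) mod k) mod k = t" if "t < k" for t
    using that by (cases "t = 0") auto
  then have "circ_eigenvalue k (\<lambda>t. cnj (s ((k - t) mod k))) m
      = (\<Sum>t<k. cnj (s ((k - t) mod k)) * fourier k m ((k - (k - t) mod k) mod k))"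
    unfolding circ_eigenvalue_def fourier_def by simp
  also have "\<dots> = (\<Sum>u<k. cnj (s u) * fourier k m (k - u))"
    using sum_lessThan_mod_reflect[of "\<lambda>u. cnj (s u) * fourier k m ((k - u) mod k)" k]
    by (simp add: fourier_mod)
  also have "\<dots> = (\<Sum>u<k. cnj (s u) * cnj (fourier k m u))"
    by (simp add: fourier_complement del: complex_cnj_power)
  also have "\<dots> = cnj (circ_eigenvalue k s m)"
    unfolding circ_eigenvalue_def fourier_def by simp
  finally show ?thesis .
qed

lemma sum_block_split:
  fixes f :: "nat \<Rightarrow> 'a::comm_monoid_add"
  shows "(\<Sum>l<k * n + k. f l) = (\<Sum>l<k. f l) + (\<Sum>j<k. \<Sum>c<n. f (k + (j * n + c)))"
  by (simp add: add.commute[of "k * n"] sum_lessThan_add sum_lessThan_mult)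

lemma block_H_top_left: "i < k \<Longrightarrow> j < k \<Longrightarrow> block_H k n S A i j = S i j"
  by (simp add: block_H_def)

lemma block_H_top_right:
  "i < k \<Longrightarrow> c < n \<Longrightarrow> block_H k n S A i (k + (j * n + c)) = fourier k i j"
  by (simp add: block_H_def fourier_kron_ones_def)

lemma block_H_bottom_left:
  "r < n \<Longrightarrow> j < k \<Longrightarrow> block_H k n S A (k + (i * n + r)) j = cnj (fourier k j i)"
  by (simp add: block_H_def fourier_adj_kron_ones_t_def del: complex_cnj_power)

lemma block_H_bottom_right:
  "block_H k n S A (k + (i * n + r)) (k + (j * n + c)) = A (i * n + r) (j * n + c)"
  by (simp add: block_H_def)

lemma block_H_adjoint:
  "cnj (block_H k n S A j i) = block_H k n (\<lambda>i j. cnj (S j i)) (\<lambda>i j. cnj (A j i)) i j"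
  by (simp add: block_H_def fourier_kron_ones_def fourier_adj_kron_ones_t_def del: complex_cnj_power)

lemma block_H_cong:
  assumes "\<And>i j. i < k \<Longrightarrow> j < k \<Longrightarrow> S i j = S' i j"
  shows "block_H k n S A = block_H k n S' A"
  using assms by (auto simp: block_H_def fun_eq_iff)

lemma block_index_less:
  fixes i r k n :: nat
  assumes "i < k" "r < n"
  shows "k + (i * n + r) < k * n + k"
proof -
  have "i * n + r < (i + 1) * n" using assms by simp
  also have "\<dots> \<le> k * n" using assms by (intro mult_right_mono) auto
  finally show ?thesis by simp
qed

lemma is_BH_adjoint:
  assumes H: "is_BH N k H"
  shows "is_BH N k (\<lambda>i j. cnj (H j i))"
proof -
  define M where "M = mat N N (\<lambda>(i, j). H i j)"
  define M' where "M' = mat N N (\<lambda>(i, j). cnj (H j i) / of_nat N)"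
  have carrier: "M \<in> carrier_mat N N" "M' \<in> carrier_mat N N"
    by (auto simp: M_def M'_def)
  have "M * M' = 1\<^sub>m N"
  proof (rule eq_matI)
    fix i j assume "i < dim_row (1\<^sub>m N :: complex mat)" "j < dim_col (1\<^sub>m N :: complex mat)"
    then show "(M * M') $$ (i, j) = 1\<^sub>m N $$ (i, j)"
      using H by (auto simp: is_BH_def M_def M'_def scalar_prod_def atLeast0LessThan
          simp flip: sum_divide_distrib)
  qed (auto simp: M_def M'_def)
  then have "M' * M = 1\<^sub>m N"
    using carrier by (rule mat_mult_left_right_inverse[rotated 2])
  have "(\<Sum>l<N. cnj (H l i) * H l j) = (if i = j then of_nat N else 0)"
    if "i < N" "j < N" for i j
  proof -
    have "(M' * M) $$ (i, j) = 1\<^sub>m N $$ (i, j)"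
      using \<open>M' * M = 1\<^sub>m N\<close> by simp
    then have "(\<Sum>l<N. cnj (H l i) * H l j) / of_nat N = (if i = j then 1 else 0)"
      using that by (simp add: M_def M'_def scalar_prod_def atLeast0LessThan sum_divide_distrib)
    then show ?thesis
      using that by (auto simp: divide_eq_eq split: if_splits)
  qed
  with H show ?thesis
    by (simp add: is_BH_def flip: complex_cnj_power)
qed

lemma block_H_row_block_sums:
  assumes H: "is_BH (k * n + k) k (block_H k n (circ k s) A)"
    and i: "i < k" and j: "j < k" and r: "r < n"
  shows "(\<Sum>c<n. A (i * n + r) (j * n + c)) = (if i = j then - cnj (circ_eigenvalue k s i) else 0)"
proof -
  let ?H = "block_H k n (circ k s) A"
  define R where "R j' = (\<Sum>c<n. A (i * n + r) (j' * n + c))" for j'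
  have "(\<Sum>l<k. fourier k a l * cnj (R l)) = - circ_eigenvalue k s i * fourier k a i"
    if a: "a < k" for a
  proof -
    have "0 = (\<Sum>l<k * n + k. ?H a l * cnj (?H (k + (i * n + r)) l))"
      using H a block_index_less[OF i r] unfolding is_BH_def by auto
    also have "\<dots> = (\<Sum>l<k. circ k s a l * fourier k l i) + (\<Sum>l<k. fourier k a l * cnj (R l))"
      using a r by (simp add: sum_block_split block_H_top_left block_H_top_right block_H_bottom_left
          block_H_bottom_right R_def sum_distrib_left del: complex_cnj_power)
    also have "\<dots> = circ_eigenvalue k s i * fourier k a i + (\<Sum>l<k. fourier k a l * cnj (R l))"
      using circ_mult_fourier[OF a, of s i] by (simp add: fourier_sym)
    finally show ?thesis
      by (simp add: eq_neg_iff_add_eq_0 add.commute)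
  qed
  then have "cnj (R j) = (if i = j then - circ_eigenvalue k s i else 0)"
    using i j by (intro dft_eq_character_imp_delta)
  then show ?thesis
    unfolding R_def by (metis complex_cnj_cnj complex_cnj_minus complex_cnj_zero)
qed

theorem theorem5p3:
  fixes k n :: nat and s :: "nat \<Rightarrow> complex" and A :: "nat \<Rightarrow> nat \<Rightarrow> complex"
  assumes "k \<ge> 2" and "n \<ge> 1"
    and "is_BH k k (circ k s)"
    and "is_BH (k * n + k) k (block_H k n (circ k s) A)"
  shows "(\<forall>i<k. \<forall>j<k. i \<noteq> j \<longrightarrow>
            (\<forall>r<n. (\<Sum>c<n. A (i * n + r) (j * n + c)) = 0) \<and>
            (\<forall>c<n. (\<Sum>r<n. A (i * n + r) (j * n + c)) = 0)) \<and>
         (\<forall>m<k. let lam = (\<Sum>j<k. s j * zeta k ^ (m * j)) in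
            (\<forall>r<n. (\<Sum>c<n. A (m * n + r) (m * n + c)) = - cnj lam) \<and>
            (\<forall>c<n. (\<Sum>r<n. A (m * n + r) (m * n + c)) = - cnj lam))"
proof -
  define s' where "s' = (\<lambda>t. cnj (s ((k - t) mod k)))"
  define A' where "A' i j = cnj (A j i)" for i j
  have "(\<lambda>i j. cnj (block_H k n (circ k s) A j i)) = block_H k n (circ k s') A'"
    unfolding block_H_adjoint A'_def s'_def by (rule block_H_cong) (simp add: cnj_circ_transpose)
  then have adjoint: "is_BH (k * n + k) k (block_H k n (circ k s') A')"
    using is_BH_adjoint[OF assms(4)] by simp
  have cols: "(\<Sum>r<n. A (i * n + r) (j * n + c))
      = (if i = j then - cnj (circ_eigenvalue k s i) else 0)" if "i < k" "j < k" "c < n" for i j c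
  proof -
    have "(\<Sum>r<n. A (i * n + r) (j * n + c)) = cnj (\<Sum>r<n. A' (j * n + c) (i * n + r))"
      by (simp add: A'_def)
    also have "\<dots> = (if i = j then - cnj (circ_eigenvalue k s i) else 0)"
      using block_H_row_block_sums[OF adjoint that(2,1,3)]
      by (auto simp: s'_def circ_eigenvalue_reflect)
    finally show ?thesis .
  qed
  show ?thesis
    using block_H_row_block_sums[OF assms(4)] cols
    unfolding Let_def circ_eigenvalue_def[symmetric] by auto
qed

end
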